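(* Let $\omega_1,\omega_2$ be domains and $\Omega$ an accessibility environment with $\Omega \vdash \omega_1 \prec \omega_2$. Then: (i) if $\Omega , \omega_1 \prec \alpha , \Omega'; \Gamma ; \Delta \vdash P :: z{:} A[\omega]$, then $\Omega ,\Omega'\{\omega_2/\alpha\}; \Gamma\{\omega_2/\alpha\}; \Delta\{\omega_2/\alpha\} \vdash P\{\omega_2/\alpha\} :: z{:}A[\omega\{\omega_2/\alpha\}]$; (ii) if $\Omega , \alpha \prec \omega_2 , \Omega'; \Gamma ; \Delta \vdash P :: z{:} A[\omega]$, then $\Omega ,\Omega'\{\omega_1/\alpha\}; \Gamma\{\omega_1/\alpha\}; \Delta\{\omega_1/\alpha\} \vdash P\{\omega_1/\alpha\} :: z{:}A[\omega\{\omega_1/\alpha\}]$. Here $\{\omega'/\alpha\}$ denotes capture-avoiding substitution of the domain $\omega'$ for the domain variable $\alpha$.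
   Context: Domain-aware session $\pi$-calculus. Domains $\omega$ range over domain tags $w\in\mathcal W$ and domain variables $\alpha\in\mathcal V$. Processes: $P ::= \mathbf 0 \mid P\mid Q \mid (\nu y)P \mid x\langle y\rangle.P \mid x(y).P \mid !x(y).P \mid [x\leftrightarrow y] \mid x\triangleright\{l_i:P_i\}_{i\in I} \mid x\triangleleft l;P \mid x\langle y@\omega\rangle.P \mid x(y@\omega).P \mid x\langle\omega\rangle.P \mid x(\alpha).P$, with $\overline{x}\langle y\rangle.P$ abbreviating $(\nu y)x\langle y\rangle.P$ and $\overline{x}\langle y@\omega\rangle.P$ abbreviating $(\nu y)x\langle y@\omega\rangle.P$; $y$ is bound in $(\nu y)P$, $x(y).P$, $!x(y).P$, $x(y@\omega).P$, and $\alpha$ in $x(\alpha).P$. Session types: $A ::= \mathbf 1 \mid A\multimap B \mid A\otimes B \mid \&\{l_i:A_i\}_{i\in I} \mid \oplus\{l_i:A_i\}_{i\in I} \mid !A \mid @_\omega A \mid \forall\alpha.A \mid \exists\alpha.A \mid {\downarrow}\alpha.A$. An accessibility environment $\Omega$ is a finite set of hypotheses $\omega_1\prec\omega_2$; $\Omega\vdash\omega_1\prec\omega_2$ is derived by the rule $\Omega,\omega_1\prec\omega_2\vdash\omega_1\prec\omega_2$; $\prec^*$ is the reflexive transitive closure; $\Omega\vdash\omega\prec^*\Delta$ means $\Omega\vdash\omega\prec^*\omega'$ for every $x{:}A[\omega']\in\Delta$. Typing judgments $\Omega;\Gamma;\Delta\vdash P :: z{:}A[\omega]$ ($P$ offers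 $A$ on $z$ at domain $\omega$, using unrestricted assignments $\Gamma$ and linear assignments $\Delta$ of the form $x{:}B[\omega']$; typing is closed under structural congruence) are given by the rules (omitting $\Omega;\Gamma$ when unchanged): (id) $\Omega;\Gamma;x{:}A[\omega]\vdash[x\leftrightarrow z]::z{:}A[\omega]$. (1R) $\Omega;\Gamma;\cdot\vdash\mathbf 0::z{:}\mathbf 1[\omega]$. (1L) from $\Delta\vdash P::z{:}C[\omega_1]$ infer $\Delta,x{:}\mathbf 1[\omega_2]\vdash P::z{:}C[\omega_1]$. ($\multimap$R) from $\Delta,y{:}A[\omega]\vdash P::z{:}B[\omega]$ infer $\Delta\vdash z(y).P::z{:}A\multimap B[\omega]$. ($\multimap$L) from $\Delta_1\vdash P::y{:}A[\omega_2]$ and $\Delta_2,x{:}B[\omega_2]\vdash Q::z{:}C[\omega_1]$ infer $\Delta_1,\Delta_2,x{:}A\multimap B[\omega_2]\vdash \overline{x}\langle y\rangle.(P\mid Q)::z{:}C[\omega_1]$. ($\otimes$R) from $\Delta_1\vdash P::y{:}A[\omega]$ and $\Delta_2\vdash Q::z{:}B[\omega]$ infer $\Delta_1,\Delta_2\vdash\overline{z}\langle y\rangle.(P\mid Q)::z{:}A\otimes B[\omega]$. ($\otimes$L) from $\Delta,y{:}A[\omega_2],x{:}B[\omega_2]\vdash P::z{:}C[\omega_1]$ infer $\Delta,x{:}A\otimes B[\omega_2]\vdash x(y).P::z{:}C[\omega_1]$. ($\&$R) from $\Delta\vdash P_i::z{:}A_i[\omega]$ for all $i\in I$ infer $\Delta\vdash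 z\triangleright\{l_i:P_i\}_{i\in I}::z{:}\&\{l_i:A_i\}_{i\in I}[\omega]$. ($\&$L$_1$) from $\Delta,x{:}A[\omega_2]\vdash P::z{:}C[\omega_1]$ infer $\Delta,x{:}\&\{l_i:A\}[\omega_2]\vdash x\triangleleft l_i;P::z{:}C[\omega_1]$. ($\&$L$_2$) from $\Delta,x{:}\&\{l_i:A_i\}_{i\in I}[\omega_2]\vdash P::z{:}C[\omega_1]$, $k\notin I$, infer $\Delta,x{:}\&\{l_j:A_j\}_{j\in I\cup\{k\}}[\omega_2]\vdash P::z{:}C[\omega_1]$. ($\oplus$R$_1$) from $\Delta\vdash P::z{:}A[\omega]$ infer $\Delta\vdash z\triangleleft l_i;P::z{:}\oplus\{l_i:A\}[\omega]$. ($\oplus$R$_2$) from $\Delta\vdash P::z{:}\oplus\{l_i:A_i\}_{i\in I}[\omega]$, $k\notin I$, infer $\Delta\vdash P::z{:}\oplus\{l_j:A_j\}_{j\in I\cup\{k\}}[\omega]$. ($\oplus$L) from $\Delta,x{:}A_i[\omega_2]\vdash Q_i::z{:}C[\omega_1]$ for all $i\in I$ infer $\Delta,x{:}\oplus\{l_i:A_i\}_{i\in I}[\omega_2]\vdash x\triangleright\{l_i:Q_i\}_{i\in I}::z{:}C[\omega_1]$. (!R) from $\Omega;\Gamma;\cdot\vdash Q::y{:}A[\omega]$ infer $\Omega;\Gamma;\cdot\vdash\overline{z}\langle u\rangle.!u(y).Q::z{:}!A[\omega]$. (!L) from $\Omega;\Gamma,u{:}A[\omega_2];\Delta\vdash P::z{:}C[\omega_1]$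 infer $\Omega;\Gamma;\Delta,x{:}!A[\omega_2]\vdash x(u).P::z{:}C[\omega_1]$. (copy) from $\Omega\vdash\omega_1\prec^*\omega_2$ and $\Omega;\Gamma,u{:}A[\omega_2];\Delta,y{:}A[\omega_2]\vdash P::z{:}C[\omega_1]$ infer $\Omega;\Gamma,u{:}A[\omega_2];\Delta\vdash\overline{u}\langle y\rangle.P::z{:}C[\omega_1]$. (cut) from $\Omega\vdash\omega_1\prec^*\omega_2$, $\Omega\vdash\omega_2\prec^*\Delta_1$, $\Omega;\Gamma;\Delta_1\vdash P::x{:}A[\omega_2]$ and $\Omega;\Gamma;\Delta_2,x{:}A[\omega_2]\vdash Q::z{:}C[\omega_1]$ infer $\Omega;\Gamma;\Delta_1,\Delta_2\vdash(\nu x)(P\mid Q)::z{:}C[\omega_1]$. (cut$^!$) from $\Omega;\Gamma;\cdot\vdash P::x{:}A[\omega_1]$ and $\Omega;\Gamma,u{:}A[\omega_1];\Delta\vdash Q::z{:}C[\omega_2]$ infer $\Omega;\Gamma;\Delta\vdash(\nu u)(!u(x).P\mid Q)::z{:}C[\omega_2]$. (@R) from $\Omega\vdash\omega_1\prec\omega_2$, $\Omega\vdash\omega_2\prec^*\Delta$, $\Omega;\Gamma;\Delta\vdash P::y{:}A[\omega_2]$ infer $\Omega;\Gamma;\Delta\vdash\overline{z}\langle y@\omega_2\rangle.P::z{:}@_{\omega_2}A[\omega_1]$. (@L) from $\Omega,\omega_2\prec\omega_3;\Gamma;\Delta,y{:}A[\omega_3]\vdash P::z{:}C[\omega_1]$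 infer $\Omega;\Gamma;\Delta,x{:}@_{\omega_3}A[\omega_2]\vdash x(y@\omega_3).P::z{:}C[\omega_1]$. ($\forall$R) from $\Omega,\omega_1\prec\alpha;\Gamma;\Delta\vdash P::z{:}A[\omega_1]$ with $\alpha$ not in $\Omega,\Gamma,\Delta,\omega_1$ infer $\Omega;\Gamma;\Delta\vdash z(\alpha).P::z{:}\forall\alpha.A[\omega_1]$. ($\forall$L) from $\Omega\vdash\omega_2\prec\omega_3$ and $\Omega;\Gamma;\Delta,x{:}A\{\omega_3/\alpha\}[\omega_2]\vdash Q::z{:}C[\omega_1]$ infer $\Omega;\Gamma;\Delta,x{:}\forall\alpha.A[\omega_2]\vdash x\langle\omega_3\rangle.Q::z{:}C[\omega_1]$. ($\exists$R) from $\Omega\vdash\omega_1\prec\omega_2$ and $\Omega;\Gamma;\Delta\vdash P::z{:}A\{\omega_2/\alpha\}[\omega_1]$ infer $\Omega;\Gamma;\Delta\vdash z\langle\omega_2\rangle.P::z{:}\exists\alpha.A[\omega_1]$. ($\exists$L) from $\Omega,\omega_2\prec\alpha;\Gamma;\Delta,x{:}A[\omega_2]\vdash Q::z{:}C[\omega_1]$ infer $\Omega;\Gamma;\Delta,x{:}\exists\alpha.A[\omega_2]\vdash x(\alpha).Q::z{:}C[\omega_1]$. (${\downarrow}$R) from $\Delta\vdash P::z{:}A\{\omega/\alpha\}[\omega]$ infer $\Delta\vdash P::z{:}{\downarrow}\alpha.A[\omega]$. (${\downarrow}$L) from $\Delta,x{:}A\{\omega/\alpha\}[\omega]\vdash P::z{:}C$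 infer $\Delta,x{:}{\downarrow}\alpha.A[\omega]\vdash P::z{:}C$. *)

theory Defs
  imports Main
begin

type_synonym name = nat
type_synonym tag = nat
type_synonym dvar = nat
type_synonym label = nat

datatype dom = Tag tag | DV dvar

text \<open>Locally nameless treatment of domain-variable binders: an occurrence of a
  domain inside a type or process is either a domain or a bound de Bruijn index.\<close>
datatype dref = D dom | BV nat

datatype ty =
    One
  | Lolli ty ty
  | Tensor ty ty
  | With "label \<Rightarrow> ty option"
  | Plus "label \<Rightarrow> ty option"
  | Bang ty
  | At dref ty
  | All ty      \<comment> \<open>forall alpha. A, alpha = BV 0 in body\<close>
  | Ex ty
  | Down ty

datatype proc =
    Nil
  | Par proc proc
  | Res name proc
  | Out name name proc
  | In name name proc
  | RepIn name name proc
  | Fwd name name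
  | Bra name "label \<Rightarrow> proc option"
  | Sel name label proc
  | OutAt name name dref proc
  | InAt name name dref proc
  | OutD name dref proc
  | InD name proc                 \<comment> \<open>x(alpha).P, alpha = BV 0 in body\<close>

fun swapn :: "name \<Rightarrow> name \<Rightarrow> name \<Rightarrow> name" where
  "swapn a b c = (if c = a then b else if c = b then a else c)"

primrec swapP :: "name \<Rightarrow> name \<Rightarrow> proc \<Rightarrow> proc" where
  "swapP a b Nil = Nil"
| "swapP a b (Par P Q) = Par (swapP a b P) (swapP a b Q)"
| "swapP a b (Res y P) = Res (swapn a b y) (swapP a b P)"
| "swapP a b (Out x y P) = Out (swapn a b x) (swapn a b y) (swapP a b P)"
| "swapP a b (In x y P) = In (swapn a b x) (swapn a b y) (swapP a b P)"
| "swapP a b (RepIn x y P) = RepIn (swapn a b x) (swapn a b y) (swapP a b P)"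
| "swapP a b (Fwd x y) = Fwd (swapn a b x) (swapn a b y)"
| "swapP a b (Bra x M) = Bra (swapn a b x) (map_option (swapP a b) \<circ> M)"
| "swapP a b (Sel x l P) = Sel (swapn a b x) l (swapP a b P)"
| "swapP a b (OutAt x y w P) = OutAt (swapn a b x) (swapn a b y) w (swapP a b P)"
| "swapP a b (InAt x y w P) = InAt (swapn a b x) (swapn a b y) w (swapP a b P)"
| "swapP a b (OutD x w P) = OutD (swapn a b x) w (swapP a b P)"
| "swapP a b (InD x P) = InD (swapn a b x) (swapP a b P)"

primrec fnP :: "proc \<Rightarrow> name set" where
  "fnP Nil = {}"
| "fnP (Par P Q) = fnP P \<union> fnP Q"
| "fnP (Res y P) = fnP P - {y}"
| "fnP (Out x y P) = {x, y} \<union> fnP P"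
| "fnP (In x y P) = {x} \<union> (fnP P - {y})"
| "fnP (RepIn x y P) = {x} \<union> (fnP P - {y})"
| "fnP (Fwd x y) = {x, y}"
| "fnP (Bra x M) = {x} \<union> \<Union> (ran (map_option fnP \<circ> M))"
| "fnP (Sel x l P) = {x} \<union> fnP P"
| "fnP (OutAt x y w P) = {x, y} \<union> fnP P"
| "fnP (InAt x y w P) = {x} \<union> (fnP P - {y})"
| "fnP (OutD x w P) = {x} \<union> fnP P"
| "fnP (InD x P) = {x} \<union> fnP P"

inductive scong :: "proc \<Rightarrow> proc \<Rightarrow> bool" where
  sc_refl: "scong P P"
| sc_sym: "scong P Q \<Longrightarrow> scong Q P"
| sc_trans: "scong P Q \<Longrightarrow> scong Q R \<Longrightarrow> scong P R"
| sc_par_nil: "scong (Par P Nil) P"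
| sc_par_comm: "scong (Par P Q) (Par Q P)"
| sc_par_assoc: "scong (Par (Par P Q) R) (Par P (Par Q R))"
| sc_res_nil: "scong (Res x Nil) Nil"
| sc_res_comm: "scong (Res x (Res y P)) (Res y (Res x P))"
| sc_extr: "x \<notin> fnP P \<Longrightarrow> scong (Par P (Res x Q)) (Res x (Par P Q))"
| sc_alpha_res: "y' \<notin> fnP P - {y} \<Longrightarrow> scong (Res y P) (Res y' (swapP y y' P))"
| sc_alpha_in: "y' \<notin> fnP P - {y} \<Longrightarrow> scong (In x y P) (In x y' (swapP y y' P))"
| sc_alpha_rep: "y' \<notin> fnP P - {y} \<Longrightarrow> scong (RepIn x y P) (RepIn x y' (swapP y y' P))"
| sc_alpha_inat: "y' \<notin> fnP P - {y} \<Longrightarrow> scong (InAt x y w P) (InAt x y' w (swapP y y' P))"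
| sc_cong_par: "scong P P' \<Longrightarrow> scong Q Q' \<Longrightarrow> scong (Par P Q) (Par P' Q')"
| sc_cong_res: "scong P P' \<Longrightarrow> scong (Res y P) (Res y P')"
| sc_cong_out: "scong P P' \<Longrightarrow> scong (Out x y P) (Out x y P')"
| sc_cong_in: "scong P P' \<Longrightarrow> scong (In x y P) (In x y P')"
| sc_cong_rep: "scong P P' \<Longrightarrow> scong (RepIn x y P) (RepIn x y P')"
| sc_cong_bra: "(\<forall>l. (M l = None \<and> M' l = None) \<or>
                   (\<exists>P P'. M l = Some P \<and> M' l = Some P' \<and> scong P P'))
                \<Longrightarrow> scong (Bra x M) (Bra x M')"
| sc_cong_sel: "scong P P' \<Longrightarrow> scong (Sel x l P) (Sel x l P')"
| sc_cong_outat: "scong P P' \<Longrightarrow> scong (OutAt x y w P) (OutAt x y w P')"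
| sc_cong_inat: "scong P P' \<Longrightarrow> scong (InAt x y w P) (InAt x y w P')"
| sc_cong_outd: "scong P P' \<Longrightarrow> scong (OutD x w P) (OutD x w P')"
| sc_cong_ind: "scong P P' \<Longrightarrow> scong (InD x P) (InD x P')"

primrec fvD :: "dom \<Rightarrow> dvar set" where
  "fvD (Tag w) = {}"
| "fvD (DV a) = {a}"

primrec fvR :: "dref \<Rightarrow> dvar set" where
  "fvR (D d) = fvD d"
| "fvR (BV n) = {}"

primrec fvT :: "ty \<Rightarrow> dvar set" where
  "fvT One = {}"
| "fvT (Lolli A B) = fvT A \<union> fvT B"
| "fvT (Tensor A B) = fvT A \<union> fvT B"
| "fvT (With M) = \<Union> (ran (map_option fvT \<circ> M))"
| "fvT (Plus M) = \<Union> (ran (map_option fvT \<circ> M))"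
| "fvT (Bang A) = fvT A"
| "fvT (At r A) = fvR r \<union> fvT A"
| "fvT (All A) = fvT A"
| "fvT (Ex A) = fvT A"
| "fvT (Down A) = fvT A"

primrec fvP :: "proc \<Rightarrow> dvar set" where
  "fvP Nil = {}"
| "fvP (Par P Q) = fvP P \<union> fvP Q"
| "fvP (Res y P) = fvP P"
| "fvP (Out x y P) = fvP P"
| "fvP (In x y P) = fvP P"
| "fvP (RepIn x y P) = fvP P"
| "fvP (Fwd x y) = {}"
| "fvP (Bra x M) = \<Union> (ran (map_option fvP \<circ> M))"
| "fvP (Sel x l P) = fvP P"
| "fvP (OutAt x y r P) = fvR r \<union> fvP P"
| "fvP (InAt x y r P) = fvR r \<union> fvP P"
| "fvP (OutD x r P) = fvR r \<union> fvP P"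
| "fvP (InD x P) = fvP P"

definition fvEnv :: "(dom \<times> dom) set \<Rightarrow> dvar set" where
  "fvEnv \<Omega> = (\<Union>(a, b)\<in>\<Omega>. fvD a \<union> fvD b)"

definition fvCtx :: "(name \<Rightarrow> (ty \<times> dom) option) \<Rightarrow> dvar set" where
  "fvCtx \<Delta> = (\<Union>(A, w)\<in>ran \<Delta>. fvT A \<union> fvD w)"

primrec openR :: "nat \<Rightarrow> dom \<Rightarrow> dref \<Rightarrow> dref" where
  "openR k w (D d) = D d"
| "openR k w (BV n) = (if n = k then D w else BV n)"

primrec openT :: "nat \<Rightarrow> dom \<Rightarrow> ty \<Rightarrow> ty" where
  "openT k w One = One"
| "openT k w (Lolli A B) = Lolli (openT k w A) (openT k w B)"
| "openT k w (Tensor A B) = Tensor (openT k w A) (openT k w B)"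
| "openT k w (With M) = With (map_option (openT k w) \<circ> M)"
| "openT k w (Plus M) = Plus (map_option (openT k w) \<circ> M)"
| "openT k w (Bang A) = Bang (openT k w A)"
| "openT k w (At r A) = At (openR k w r) (openT k w A)"
| "openT k w (All A) = All (openT (Suc k) w A)"
| "openT k w (Ex A) = Ex (openT (Suc k) w A)"
| "openT k w (Down A) = Down (openT (Suc k) w A)"

primrec openP :: "nat \<Rightarrow> dom \<Rightarrow> proc \<Rightarrow> proc" where
  "openP k w Nil = Nil"
| "openP k w (Par P Q) = Par (openP k w P) (openP k w Q)"
| "openP k w (Res y P) = Res y (openP k w P)"
| "openP k w (Out x y P) = Out x y (openP k w P)"
| "openP k w (In x y P) = In x y (openP k w P)"
| "openP k w (RepIn x y P) = RepIn x y (openP k w P)"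
| "openP k w (Fwd x y) = Fwd x y"
| "openP k w (Bra x M) = Bra x (map_option (openP k w) \<circ> M)"
| "openP k w (Sel x l P) = Sel x l (openP k w P)"
| "openP k w (OutAt x y r P) = OutAt x y (openR k w r) (openP k w P)"
| "openP k w (InAt x y r P) = InAt x y (openR k w r) (openP k w P)"
| "openP k w (OutD x r P) = OutD x (openR k w r) (openP k w P)"
| "openP k w (InD x P) = InD x (openP (Suc k) w P)"

text \<open>Substitution {w/a} of the domain w for the free domain variable a.  Since
  bound domain variables are de Bruijn indices, this is capture-avoiding.\<close>
primrec substD :: "dom \<Rightarrow> dvar \<Rightarrow> dom \<Rightarrow> dom" where
  "substD w a (Tag t) = Tag t"
| "substD w a (DV b) = (if b = a then w else DV b)"

primrec substR :: "dom \<Rightarrow> dvar \<Rightarrow> dref \<Rightarrow> dref" where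
  "substR w a (D d) = D (substD w a d)"
| "substR w a (BV n) = BV n"

primrec substT :: "dom \<Rightarrow> dvar \<Rightarrow> ty \<Rightarrow> ty" where
  "substT w a One = One"
| "substT w a (Lolli A B) = Lolli (substT w a A) (substT w a B)"
| "substT w a (Tensor A B) = Tensor (substT w a A) (substT w a B)"
| "substT w a (With M) = With (map_option (substT w a) \<circ> M)"
| "substT w a (Plus M) = Plus (map_option (substT w a) \<circ> M)"
| "substT w a (Bang A) = Bang (substT w a A)"
| "substT w a (At r A) = At (substR w a r) (substT w a A)"
| "substT w a (All A) = All (substT w a A)"
| "substT w a (Ex A) = Ex (substT w a A)"
| "substT w a (Down A) = Down (substT w a A)"

primrec substP :: "dom \<Rightarrow> dvar \<Rightarrow> proc \<Rightarrow> proc" where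
  "substP w a Nil = Nil"
| "substP w a (Par P Q) = Par (substP w a P) (substP w a Q)"
| "substP w a (Res y P) = Res y (substP w a P)"
| "substP w a (Out x y P) = Out x y (substP w a P)"
| "substP w a (In x y P) = In x y (substP w a P)"
| "substP w a (RepIn x y P) = RepIn x y (substP w a P)"
| "substP w a (Fwd x y) = Fwd x y"
| "substP w a (Bra x M) = Bra x (map_option (substP w a) \<circ> M)"
| "substP w a (Sel x l P) = Sel x l (substP w a P)"
| "substP w a (OutAt x y r P) = OutAt x y (substR w a r) (substP w a P)"
| "substP w a (InAt x y r P) = InAt x y (substR w a r) (substP w a P)"
| "substP w a (OutD x r P) = OutD x (substR w a r) (substP w a P)"
| "substP w a (InD x P) = InD x (substP w a P)"

definition substEnv :: "dom \<Rightarrow> dvar \<Rightarrow> (dom \<times> dom) set \<Rightarrow> (dom \<times> dom) set" where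
  "substEnv w a \<Omega> = (\<lambda>(b, c). (substD w a b, substD w a c)) ` \<Omega>"

definition substCtx :: "dom \<Rightarrow> dvar \<Rightarrow> (name \<Rightarrow> (ty \<times> dom) option)
                         \<Rightarrow> (name \<Rightarrow> (ty \<times> dom) option)" where
  "substCtx w a \<Delta> = map_option (\<lambda>(A, d). (substT w a A, substD w a d)) \<circ> \<Delta>"

type_synonym env = "(dom \<times> dom) set"
type_synonym ctx = "name \<Rightarrow> (ty \<times> dom) option"

text \<open>Omega |- w1 < w2 iff (w1,w2) in Omega; Omega |- w1 <* w2 iff (w1,w2) in Omega^*.\<close>
definition prec_ctx :: "env \<Rightarrow> dom \<Rightarrow> ctx \<Rightarrow> bool" where
  "prec_ctx \<Omega> w \<Delta> \<longleftrightarrow> (\<forall>x A w'. \<Delta> x = Some (A, w') \<longrightarrow> (w, w') \<in> \<Omega>\<^sup>*)"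

definition disj :: "ctx \<Rightarrow> ctx \<Rightarrow> bool" where
  "disj \<Delta>1 \<Delta>2 \<longleftrightarrow> dom \<Delta>1 \<inter> dom \<Delta>2 = {}"

text \<open>typed Omega Gamma Delta P z A w  stands for  Omega; Gamma; Delta |- P :: z:A[w].
  The context extension "Delta, x:A[w]" is Delta(x |-> (A,w)) with x not in dom Delta;
  "Delta1, Delta2" is Delta1 ++ Delta2 with disjoint domains.\<close>
inductive typed :: "env \<Rightarrow> ctx \<Rightarrow> ctx \<Rightarrow> proc \<Rightarrow> name \<Rightarrow> ty \<Rightarrow> dom \<Rightarrow> bool" where
  t_id: "typed \<Omega> \<Gamma> [x \<mapsto> (A, w)] (Fwd x z) z A w"
| t_oneR: "typed \<Omega> \<Gamma> Map.empty Nil z One w"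
| t_oneL: "x \<notin> dom \<Delta> \<Longrightarrow> typed \<Omega> \<Gamma> \<Delta> P z C w1 \<Longrightarrow>
           typed \<Omega> \<Gamma> (\<Delta>(x \<mapsto> (One, w2))) P z C w1"
| t_lolliR: "y \<notin> dom \<Delta> \<Longrightarrow> typed \<Omega> \<Gamma> (\<Delta>(y \<mapsto> (A, w))) P z B w \<Longrightarrow>
             typed \<Omega> \<Gamma> \<Delta> (In z y P) z (Lolli A B) w"
| t_lolliL: "disj \<Delta>1 \<Delta>2 \<Longrightarrow> x \<notin> dom \<Delta>1 \<Longrightarrow> x \<notin> dom \<Delta>2 \<Longrightarrow>
             typed \<Omega> \<Gamma> \<Delta>1 P y A w2 \<Longrightarrow> typed \<Omega> \<Gamma> (\<Delta>2(x \<mapsto> (B, w2))) Q z C w1 \<Longrightarrow>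
             typed \<Omega> \<Gamma> ((\<Delta>1 ++ \<Delta>2)(x \<mapsto> (Lolli A B, w2))) (Res y (Out x y (Par P Q))) z C w1"
| t_tensorR: "disj \<Delta>1 \<Delta>2 \<Longrightarrow> typed \<Omega> \<Gamma> \<Delta>1 P y A w \<Longrightarrow> typed \<Omega> \<Gamma> \<Delta>2 Q z B w \<Longrightarrow>
              typed \<Omega> \<Gamma> (\<Delta>1 ++ \<Delta>2) (Res y (Out z y (Par P Q))) z (Tensor A B) w"
| t_tensorL: "x \<notin> dom \<Delta> \<Longrightarrow> y \<notin> dom \<Delta> \<Longrightarrow> x \<noteq> y \<Longrightarrow>
              typed \<Omega> \<Gamma> (\<Delta>(y \<mapsto> (A, w2), x \<mapsto> (B, w2))) P z C w1 \<Longrightarrow>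
              typed \<Omega> \<Gamma> (\<Delta>(x \<mapsto> (Tensor A B, w2))) (In x y P) z C w1"
| t_withR: "dom Ps = dom M \<Longrightarrow>
            (\<forall>l A P. M l = Some A \<longrightarrow> Ps l = Some P \<longrightarrow> typed \<Omega> \<Gamma> \<Delta> P z A w) \<Longrightarrow>
            typed \<Omega> \<Gamma> \<Delta> (Bra z Ps) z (With M) w"
| t_withL1: "x \<notin> dom \<Delta> \<Longrightarrow> typed \<Omega> \<Gamma> (\<Delta>(x \<mapsto> (A, w2))) P z C w1 \<Longrightarrow>
             typed \<Omega> \<Gamma> (\<Delta>(x \<mapsto> (With [l \<mapsto> A], w2))) (Sel x l P) z C w1"
| t_withL2: "x \<notin> dom \<Delta> \<Longrightarrow> k \<notin> dom M \<Longrightarrow> typed \<Omega> \<Gamma> (\<Delta>(x \<mapsto> (With M, w2))) P z C w1 \<Longrightarrow>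
             typed \<Omega> \<Gamma> (\<Delta>(x \<mapsto> (With (M(k \<mapsto> Ak)), w2))) P z C w1"
| t_plusR1: "typed \<Omega> \<Gamma> \<Delta> P z A w \<Longrightarrow> typed \<Omega> \<Gamma> \<Delta> (Sel z l P) z (Plus [l \<mapsto> A]) w"
| t_plusR2: "k \<notin> dom M \<Longrightarrow> typed \<Omega> \<Gamma> \<Delta> P z (Plus M) w \<Longrightarrow>
             typed \<Omega> \<Gamma> \<Delta> P z (Plus (M(k \<mapsto> Ak))) w"
| t_plusL: "x \<notin> dom \<Delta> \<Longrightarrow> dom Qs = dom M \<Longrightarrow>
            (\<forall>l A Q. M l = Some A \<longrightarrow> Qs l = Some Q \<longrightarrow> typed \<Omega> \<Gamma> (\<Delta>(x \<mapsto> (A, w2))) Q z C w1) \<Longrightarrow>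
            typed \<Omega> \<Gamma> (\<Delta>(x \<mapsto> (Plus M, w2))) (Bra x Qs) z C w1"
| t_bangR: "typed \<Omega> \<Gamma> Map.empty Q y A w \<Longrightarrow>
            typed \<Omega> \<Gamma> Map.empty (Res u (Out z u (RepIn u y Q))) z (Bang A) w"
| t_bangL: "u \<notin> dom \<Gamma> \<Longrightarrow> x \<notin> dom \<Delta> \<Longrightarrow> typed \<Omega> (\<Gamma>(u \<mapsto> (A, w2))) \<Delta> P z C w1 \<Longrightarrow>
            typed \<Omega> \<Gamma> (\<Delta>(x \<mapsto> (Bang A, w2))) (In x u P) z C w1"
| t_copy: "(w1, w2) \<in> \<Omega>\<^sup>* \<Longrightarrow> \<Gamma> u = Some (A, w2) \<Longrightarrow> y \<notin> dom \<Delta> \<Longrightarrow>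
           typed \<Omega> \<Gamma> (\<Delta>(y \<mapsto> (A, w2))) P z C w1 \<Longrightarrow>
           typed \<Omega> \<Gamma> \<Delta> (Res y (Out u y P)) z C w1"
| t_cut: "(w1, w2) \<in> \<Omega>\<^sup>* \<Longrightarrow> prec_ctx \<Omega> w2 \<Delta>1 \<Longrightarrow> disj \<Delta>1 \<Delta>2 \<Longrightarrow> x \<notin> dom \<Delta>2 \<Longrightarrow>
          typed \<Omega> \<Gamma> \<Delta>1 P x A w2 \<Longrightarrow> typed \<Omega> \<Gamma> (\<Delta>2(x \<mapsto> (A, w2))) Q z C w1 \<Longrightarrow>
          typed \<Omega> \<Gamma> (\<Delta>1 ++ \<Delta>2) (Res x (Par P Q)) z C w1"
| t_cutbang: "u \<notin> dom \<Gamma> \<Longrightarrow> typed \<Omega> \<Gamma> Map.empty P x A w1 \<Longrightarrow>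
              typed \<Omega> (\<Gamma>(u \<mapsto> (A, w1))) \<Delta> Q z C w2 \<Longrightarrow>
              typed \<Omega> \<Gamma> \<Delta> (Res u (Par (RepIn u x P) Q)) z C w2"
| t_atR: "(w1, w2) \<in> \<Omega> \<Longrightarrow> prec_ctx \<Omega> w2 \<Delta> \<Longrightarrow> typed \<Omega> \<Gamma> \<Delta> P y A w2 \<Longrightarrow>
          typed \<Omega> \<Gamma> \<Delta> (Res y (OutAt z y (D w2) P)) z (At (D w2) A) w1"
| t_atL: "x \<notin> dom \<Delta> \<Longrightarrow> y \<notin> dom \<Delta> \<Longrightarrow>
          typed (insert (w2, w3) \<Omega>) \<Gamma> (\<Delta>(y \<mapsto> (A, w3))) P z C w1 \<Longrightarrow>
          typed \<Omega> \<Gamma> (\<Delta>(x \<mapsto> (At (D w3) A, w2))) (InAt x y (D w3) P) z C w1"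
| t_allR: "a \<notin> fvEnv \<Omega> \<union> fvCtx \<Gamma> \<union> fvCtx \<Delta> \<union> fvD w1 \<union> fvP P \<union> fvT A \<Longrightarrow>
           typed (insert (w1, DV a) \<Omega>) \<Gamma> \<Delta> (openP 0 (DV a) P) z (openT 0 (DV a) A) w1 \<Longrightarrow>
           typed \<Omega> \<Gamma> \<Delta> (InD z P) z (All A) w1"
| t_allL: "x \<notin> dom \<Delta> \<Longrightarrow> (w2, w3) \<in> \<Omega> \<Longrightarrow>
           typed \<Omega> \<Gamma> (\<Delta>(x \<mapsto> (openT 0 w3 A, w2))) Q z C w1 \<Longrightarrow>
           typed \<Omega> \<Gamma> (\<Delta>(x \<mapsto> (All A, w2))) (OutD x (D w3) Q) z C w1"
| t_exR: "(w1, w2) \<in> \<Omega> \<Longrightarrow> typed \<Omega> \<Gamma> \<Delta> P z (openT 0 w2 A) w1 \<Longrightarrow>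
          typed \<Omega> \<Gamma> \<Delta> (OutD z (D w2) P) z (Ex A) w1"
| t_exL: "x \<notin> dom \<Delta> \<Longrightarrow>
          a \<notin> fvEnv \<Omega> \<union> fvCtx \<Gamma> \<union> fvCtx \<Delta> \<union> fvD w1 \<union> fvD w2 \<union> fvP Q \<union> fvT A \<union> fvT C \<Longrightarrow>
          typed (insert (w2, DV a) \<Omega>) \<Gamma> (\<Delta>(x \<mapsto> (openT 0 (DV a) A, w2))) (openP 0 (DV a) Q) z C w1 \<Longrightarrow>
          typed \<Omega> \<Gamma> (\<Delta>(x \<mapsto> (Ex A, w2))) (InD x Q) z C w1"
| t_downR: "typed \<Omega> \<Gamma> \<Delta> P z (openT 0 w A) w \<Longrightarrow> typed \<Omega> \<Gamma> \<Delta> P z (Down A) w"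
| t_downL: "x \<notin> dom \<Delta> \<Longrightarrow> typed \<Omega> \<Gamma> (\<Delta>(x \<mapsto> (openT 0 w A, w))) P z C w1 \<Longrightarrow>
            typed \<Omega> \<Gamma> (\<Delta>(x \<mapsto> (Down A, w))) P z C w1"
| t_scong: "typed \<Omega> \<Gamma> \<Delta> P z A w \<Longrightarrow> scong P Q \<Longrightarrow> typed \<Omega> \<Gamma> \<Delta> Q z A w"

end

(* Both parts are instances of a single substitution lemma: if the substitution {d/a} sends
   every accessibility hypothesis of E to one of E', it sends every typing derivation under E
   to a derivation under E'.  The relational side conditions of cut, copy, @R, forall-L and
   exists-R are carried along, and the eigenvariables of forall-R and exists-L stay fresh.
   Substituting w2 (resp. w1) for alpha turns the hypothesis w1 < alpha (resp. alpha < w2) into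
   w1 < w2, which is in Omega, and leaves Omega itself unchanged since alpha does not occur in it. *)
theory Submission
  imports Defs
begin

lemma Some_in_rangeI: "m l = Some v \<Longrightarrow> Some v \<in> range m"
  by (metis rangeI)

lemma substD_fresh: "a \<notin> fvD b \<Longrightarrow> substD d a b = b"
  by (cases b) auto

lemma fvD_substD: "fvD (substD d a b) \<subseteq> fvD b \<union> fvD d"
  by (cases b) auto

lemma fvR_substR: "fvR (substR d a r) \<subseteq> fvR r \<union> fvD d"
  by (cases r) (auto dest: fvD_substD[THEN subsetD])

lemma fvT_substT: "fvT (substT d a A) \<subseteq> fvT A \<union> fvD d"
  by (induction A) (fastforce simp: ran_def dest: fvR_substR[THEN subsetD])+

lemma fvP_substP: "fvP (substP d a P) \<subseteq> fvP P \<union> fvD d"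
  by (induction P) (fastforce simp: ran_def dest: fvR_substR[THEN subsetD])+

lemma fvCtx_substCtx: "fvCtx (substCtx d a \<Gamma>) \<subseteq> fvCtx \<Gamma> \<union> fvD d"
  using fvT_substT fvD_substD by (fastforce simp: fvCtx_def substCtx_def ran_def)

lemma substR_openR: "substR d a (openR k e r) = openR k (substD d a e) (substR d a r)"
  by (cases r) auto

lemma substT_openT [simp]: "substT d a (openT k e A) = openT k (substD d a e) (substT d a A)"
  by (induction A arbitrary: k)
    (auto simp: fun_eq_iff option.map_comp substR_openR intro!: option.map_cong0 dest: Some_in_rangeI)

lemma substP_openP: "substP d a (openP k e P) = openP k (substD d a e) (substP d a P)"
  by (induction P arbitrary: k)
    (auto simp: fun_eq_iff option.map_comp substR_openR intro!: option.map_cong0 dest: Some_in_rangeI)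

lemma substP_swapP: "substP d a (swapP x y P) = swapP x y (substP d a P)"
  by (induction P)
    (auto simp: fun_eq_iff option.map_comp intro!: option.map_cong0 dest: Some_in_rangeI)

lemma fnP_substP [simp]: "fnP (substP d a P) = fnP P"
proof (induction P)
  case (Bra x M)
  have "map_option fnP \<circ> (map_option (substP d a) \<circ> M) = map_option fnP \<circ> M"
    using Bra.IH by (auto simp: fun_eq_iff option.map_comp intro!: option.map_cong0 dest: Some_in_rangeI)
  then show ?case by simp
qed auto

lemma scong_substP: "scong P Q \<Longrightarrow> scong (substP d a P) (substP d a Q)"
proof (induction rule: scong.induct)
  case (sc_cong_bra M M' x)
  then show ?case by (force intro!: scong.sc_cong_bra)
qed (auto intro: scong.intros simp: substP_swapP)

(* The induction rule of typed states context extensions as lambda terms; this folds them back. *)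
lemma fun_upd_lambda [simp]: "(\<lambda>y. if y = x then v else f y) = f(x := v)"
  by (simp add: fun_upd_def)

lemma substCtx_upd [simp]:
  "substCtx d a (\<Gamma>(x \<mapsto> (A, w))) = (substCtx d a \<Gamma>)(x \<mapsto> (substT d a A, substD d a w))"
  by (simp add: substCtx_def)

lemma substCtx_empty [simp]: "substCtx d a Map.empty = Map.empty"
  by (simp add: substCtx_def fun_eq_iff)

lemma substCtx_map_add [simp]: "substCtx d a (\<Gamma> ++ \<Delta>) = substCtx d a \<Gamma> ++ substCtx d a \<Delta>"
  by (auto simp: substCtx_def fun_eq_iff map_add_def split: option.splits)

lemma dom_substCtx [simp]: "dom (substCtx d a \<Gamma>) = dom \<Gamma>"
  by (auto simp: substCtx_def)

lemma disj_substCtx [simp]: "disj (substCtx d a \<Gamma>) (substCtx d a \<Delta>) = disj \<Gamma> \<Delta>"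
  by (simp add: disj_def)

lemma substCtx_eq_Some [simp]:
  "substCtx d a \<Gamma> x = Some (B, v) \<longleftrightarrow>
   (\<exists>A w. \<Gamma> x = Some (A, w) \<and> B = substT d a A \<and> v = substD d a w)"
  by (auto simp: substCtx_def)

(* The conditions on free variables ensure that an eigenvariable fresh for E stays
   distinct from a and fresh for d and E'. *)
definition subst_env_into :: "dom \<Rightarrow> dvar \<Rightarrow> env \<Rightarrow> env \<Rightarrow> bool" where
  "subst_env_into d a E E' \<longleftrightarrow>
     (\<forall>(b, c)\<in>E. (substD d a b, substD d a c) \<in> E') \<and>
     fvEnv E' \<subseteq> fvEnv E \<and> fvD d \<subseteq> fvEnv E \<and> a \<in> fvEnv E"

lemma fvEnv_insert [simp]: "fvEnv (insert (b, c) E) = fvD b \<union> fvD c \<union> fvEnv E"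
  by (auto simp: fvEnv_def)

lemma fvEnv_mem: "(b, c) \<in> E \<Longrightarrow> fvD b \<union> fvD c \<subseteq> fvEnv E"
  by (auto simp: fvEnv_def)

lemma fvEnv_substEnv: "fvEnv (substEnv d a E) \<subseteq> fvEnv E \<union> fvD d"
  unfolding fvEnv_def substEnv_def using fvD_substD by fastforce

lemma subst_env_intoD [simp]:
  "subst_env_into d a E E' \<Longrightarrow> (b, c) \<in> E \<Longrightarrow> (substD d a b, substD d a c) \<in> E'"
  by (auto simp: subst_env_into_def)

lemma subst_env_into_rtrancl [simp]:
  assumes "subst_env_into d a E E'" and "(b, c) \<in> E\<^sup>*"
  shows "(substD d a b, substD d a c) \<in> E'\<^sup>*"
  using assms(2)
proof (induction rule: rtrancl_induct)
  case (step c c')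
  then show ?case
    using assms(1) by (auto dest: subst_env_intoD intro: rtrancl_into_rtrancl)
qed simp

lemma subst_env_into_prec_ctx [simp]:
  "subst_env_into d a E E' \<Longrightarrow> prec_ctx E w \<Delta> \<Longrightarrow> prec_ctx E' (substD d a w) (substCtx d a \<Delta>)"
  unfolding prec_ctx_def substCtx_def by (auto dest: subst_env_into_rtrancl)

lemma subst_env_into_insert:
  "subst_env_into d a E E' \<Longrightarrow>
   subst_env_into d a (insert (b, c) E) (insert (substD d a b, substD d a c) E')"
  unfolding subst_env_into_def using fvD_substD[of d a b] fvD_substD[of d a c] by auto

lemma subst_env_into_fresh:
  assumes "subst_env_into d a E E'" and "b \<notin> fvEnv E"
  shows "b \<noteq> a" and "b \<notin> fvD d" and "b \<notin> fvEnv E'"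
  using assms by (auto simp: subst_env_into_def)

lemma subst_env_into_insert_eigenvar:
  assumes "subst_env_into d a E E'" and "b \<notin> fvEnv E"
  shows "subst_env_into d a (insert (w, DV b) E) (insert (substD d a w, DV b) E')"
  using subst_env_into_insert[OF assms(1), of w "DV b"] subst_env_into_fresh(1)[OF assms] by simp

lemma typed_subst:
  "typed E \<Gamma> \<Delta> P z A w \<Longrightarrow> subst_env_into d a E E' \<Longrightarrow>
   typed E' (substCtx d a \<Gamma>) (substCtx d a \<Delta>) (substP d a P) z (substT d a A) (substD d a w)"
proof (induction arbitrary: E' rule: typed.induct)
  case (t_id E \<Gamma> x A w z)
  show ?case
    using typed.t_id[of E' _ x] by simp
next
  case t_oneR
  then show ?case by (auto intro!: typed.t_oneR)
next
  case t_oneL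
  then show ?case by (auto intro!: typed.t_oneL)
next
  case t_lolliR
  then show ?case by (auto intro!: typed.t_lolliR)
next
  case t_lolliL
  then show ?case by (auto intro!: typed.t_lolliL)
next
  case t_tensorR
  then show ?case by (auto intro!: typed.t_tensorR)
next
  case t_tensorL
  then show ?case by (auto intro!: typed.t_tensorL)
next
  case t_withR
  then show ?case by (simp, intro typed.t_withR) auto
next
  case t_withL1
  then show ?case by (auto intro!: typed.t_withL1)
next
  case t_withL2
  then show ?case by (auto intro!: typed.t_withL2)
next
  case t_plusR1
  then show ?case by (auto intro!: typed.t_plusR1)
next
  case t_plusR2
  then show ?case by (auto intro!: typed.t_plusR2)
next
  case t_plusL
  then show ?case by (simp, intro typed.t_plusL) auto
next
  case t_bangR
  then show ?case by (auto intro!: typed.t_bangR)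
next
  case t_bangL
  then show ?case by (auto intro!: typed.t_bangL)
next
  case (t_copy w1 w2 E \<Gamma> u A)
  then show ?case by (auto intro!: typed.t_copy[of _ "substD d a w2" _ _ _ "substT d a A"])
next
  case (t_cut w1 w2)
  then show ?case by (auto intro!: typed.t_cut[of _ "substD d a w2"])
next
  case t_cutbang
  then show ?case by (auto intro!: typed.t_cutbang)
next
  case t_atR
  then show ?case by (auto intro!: typed.t_atR)
next
  case t_atL
  then show ?case by (auto intro!: typed.t_atL intro: subst_env_into_insert)
next
  case t_allL
  then show ?case by (auto intro!: typed.t_allL)
next
  case t_exR
  then show ?case by (auto intro!: typed.t_exR)
next
  case t_downR
  then show ?case by (auto intro!: typed.t_downR)
next
  case t_downL
  then show ?case by (auto intro!: typed.t_downL)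
next
  case t_scong
  then show ?case by (blast intro: typed.t_scong scong_substP)
next
  case (t_allR b E \<Gamma> \<Delta> w1 P A z)
  have "b \<notin> fvEnv E"
    using t_allR.hyps(1) by blast
  note fresh = subst_env_into_fresh[OF t_allR.prems this]
  from t_allR.IH[OF subst_env_into_insert_eigenvar[OF t_allR.prems \<open>b \<notin> fvEnv E\<close>]]
  have "typed (insert (substD d a w1, DV b) E') (substCtx d a \<Gamma>) (substCtx d a \<Delta>)
      (openP 0 (DV b) (substP d a P)) z (openT 0 (DV b) (substT d a A)) (substD d a w1)"
    using fresh(1) by (simp add: substP_openP)
  moreover have "b \<notin> fvEnv E' \<union> fvCtx (substCtx d a \<Gamma>) \<union> fvCtx (substCtx d a \<Delta>) \<union>
      fvD (substD d a w1) \<union> fvP (substP d a P) \<union> fvT (substT d a A)"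
    using fresh t_allR.hyps(1) fvCtx_substCtx fvD_substD fvP_substP fvT_substT by blast
  ultimately show ?case
    using typed.t_allR by simp
next
  case (t_exL x \<Delta> b E \<Gamma> w1 w2 Q A C z)
  have "b \<notin> fvEnv E"
    using t_exL.hyps(2) by blast
  note fresh = subst_env_into_fresh[OF t_exL.prems this]
  from t_exL.IH[OF subst_env_into_insert_eigenvar[OF t_exL.prems \<open>b \<notin> fvEnv E\<close>]]
  have "typed (insert (substD d a w2, DV b) E') (substCtx d a \<Gamma>)
      ((substCtx d a \<Delta>)(x \<mapsto> (openT 0 (DV b) (substT d a A), substD d a w2)))
      (openP 0 (DV b) (substP d a Q)) z (substT d a C) (substD d a w1)"
    using fresh(1) by (simp add: substP_openP)
  moreover have "b \<notin> fvEnv E' \<union> fvCtx (substCtx d a \<Gamma>) \<union> fvCtx (substCtx d a \<Delta>) \<union>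
      fvD (substD d a w1) \<union> fvD (substD d a w2) \<union> fvP (substP d a Q) \<union> fvT (substT d a A) \<union>
      fvT (substT d a C)"
    using fresh t_exL.hyps(2) fvCtx_substCtx fvD_substD fvP_substP fvT_substT by blast
  ultimately show ?case
    using typed.t_exL t_exL.hyps(1) by simp
qed

lemma subst_env_into_discharge:
  assumes "a \<notin> fvEnv \<Omega>" and "fvD d \<subseteq> fvEnv \<Omega>"
    and "(substD d a b, substD d a c) \<in> \<Omega>" and "a \<in> fvD b \<union> fvD c"
  shows "subst_env_into d a (\<Omega> \<union> {(b, c)} \<union> \<Omega>') (\<Omega> \<union> substEnv d a \<Omega>')"
proof -
  have "(substD d a b', substD d a c') = (b', c')" if "(b', c') \<in> \<Omega>" for b' c'
    using fvEnv_mem[OF that] assms(1) by (auto intro!: substD_fresh)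
  then have "(substD d a b', substD d a c') \<in> \<Omega> \<union> substEnv d a \<Omega>'"
    if "(b', c') \<in> \<Omega> \<union> {(b, c)} \<union> \<Omega>'" for b' c'
    using that assms(3) by (auto simp: substEnv_def)
  moreover have "fvEnv (\<Omega> \<union> substEnv d a \<Omega>') \<subseteq> fvEnv (\<Omega> \<union> {(b, c)} \<union> \<Omega>')"
    using fvEnv_substEnv[of d a \<Omega>'] assms(2) by (auto simp: fvEnv_def)
  ultimately show ?thesis
    using assms(2,4) by (auto simp: subst_env_into_def fvEnv_def)
qed

theorem lemma3:
  fixes \<Omega> \<Omega>' :: env and w1 w2 :: dom and a :: dvar
  assumes "finite \<Omega>" and "finite \<Omega>'"
    and "(w1, w2) \<in> \<Omega>"
    and "a \<notin> fvEnv \<Omega>"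
  shows "(typed (\<Omega> \<union> {(w1, DV a)} \<union> \<Omega>') \<Gamma> \<Delta> P z A w \<longrightarrow>
           typed (\<Omega> \<union> substEnv w2 a \<Omega>') (substCtx w2 a \<Gamma>) (substCtx w2 a \<Delta>)
                 (substP w2 a P) z (substT w2 a A) (substD w2 a w))
       \<and> (typed (\<Omega> \<union> {(DV a, w2)} \<union> \<Omega>') \<Gamma> \<Delta> P z A w \<longrightarrow>
           typed (\<Omega> \<union> substEnv w1 a \<Omega>') (substCtx w1 a \<Gamma>) (substCtx w1 a \<Delta>)
                 (substP w1 a P) z (substT w1 a A) (substD w1 a w))"
proof -
  have "fvD w1 \<union> fvD w2 \<subseteq> fvEnv \<Omega>"
    using fvEnv_mem[OF assms(3)] .
  then have fv: "a \<notin> fvD w1" "a \<notin> fvD w2" "fvD w1 \<subseteq> fvEnv \<Omega>" "fvD w2 \<subseteq> fvEnv \<Omega>"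
    using assms(4) by auto
  have "subst_env_into w2 a (\<Omega> \<union> {(w1, DV a)} \<union> \<Omega>') (\<Omega> \<union> substEnv w2 a \<Omega>')"
    by (rule subst_env_into_discharge) (use assms(3,4) fv in \<open>simp_all add: substD_fresh\<close>)
  moreover have "subst_env_into w1 a (\<Omega> \<union> {(DV a, w2)} \<union> \<Omega>') (\<Omega> \<union> substEnv w1 a \<Omega>')"
    by (rule subst_env_into_discharge) (use assms(3,4) fv in \<open>simp_all add: substD_fresh\<close>)
  ultimately show ?thesis
    using typed_subst by blast
qed

end
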